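(* Let $V$ be a finite dimensional $\mathbb{Q}$-vector space, $C\subset V$ a full dimensional convex polyhedral cone, $\Gamma\subset V$ a full rank lattice, and $\Delta:C\to\mathcal{P}_n(\mathbb{Q})$ a linear family of polytopes. Let $\kappa\in\Gamma$ be such that $\Delta(\kappa)$ is an anticanonical polytope for $(\Delta,\Gamma)$, and assume $\kappa\in C^\circ$. Then $\Delta(\kappa)$ contains exactly one lattice point of $\mathbb{Z}^n$ in its (relative) interior.
   Context: $\mathcal{P}_n(\mathbb{Q})$ is the set of convex polytopes in $\mathbb{R}^n$ with rational vertices. A linear family is a map $\Delta:C\to\mathcal{P}_n(\mathbb{Q})$ with $\Delta(c_1\lambda_1+c_2\lambda_2)=c_1\Delta(\lambda_1)+c_2\Delta(\lambda_2)$ (Minkowski sum) for $\lambda_i\in C$, $c_i\in\mathbb{Q}_{\ge0}$; it extends linearly to $V$ with values in virtual polytopes. For a convex set $P$, $N(P)=|P\cap\mathbb{Z}^n|$, and $P^\circ$ denotes the relative interior. $\Delta(\kappa)$, $\kappa\in\Gamma$, is an anticanonical polytope for $(\Delta,\Gamma)$ if for all $\gamma\in C^\circ\cap\Gamma$ with $\gamma-\kappa\in C\cap\Gamma$ we have $N(\Delta(\gamma-\kappa))=N(\Delta^\circ(\gamma))$. *)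

theory Defs
  imports "HOL-Analysis.Analysis"
begin

text \<open>The finite dimensional Q-vector space V is modelled as the rational points
  of real^'m (any finite dimensional Q-vector space is isomorphic to some Q^m).\<close>
definition rat_vecs :: "(real^'m) set" where
  "rat_vecs = {x. \<forall>i. x $ i \<in> \<rat>}"

definition int_points :: "(real^'n) set" where
  "int_points = {x. \<forall>i. x $ i \<in> \<int>}"

definition N :: "(real^'n) set \<Rightarrow> nat" where
  "N P = card (P \<inter> int_points)"

definition rat_polytopes :: "(real^'n) set set" where
  "rat_polytopes = {convex hull S | S. finite S \<and> S \<noteq> {} \<and> S \<subseteq> rat_vecs}"

definition gen_cone :: "(real^'m) set \<Rightarrow> (real^'m) set" where
  "gen_cone G = {\<Sum>g\<in>G. a g *\<^sub>R g | a. \<forall>g\<in>G. 0 \<le> a g}"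

definition rat_cone :: "(real^'m) set \<Rightarrow> (real^'m) set" where
  "rat_cone G = rat_vecs \<inter> gen_cone G"

definition rat_cone_interior :: "(real^'m) set \<Rightarrow> (real^'m) set" where
  "rat_cone_interior G = rat_vecs \<inter> interior (gen_cone G)"

definition full_rank_lattice :: "(real^'m) set \<Rightarrow> bool" where
  "full_rank_lattice \<Gamma> \<longleftrightarrow> (\<exists>B. finite B \<and> B \<subseteq> rat_vecs \<and> independent B \<and> span B = UNIV \<and>
      \<Gamma> = {\<Sum>b\<in>B. of_int (k b) *\<^sub>R b | k. True})"

definition linear_family :: "(real^'m) set \<Rightarrow> (real^'m \<Rightarrow> (real^'n) set) \<Rightarrow> bool" where
  "linear_family C \<Delta> \<longleftrightarrow>
     (\<forall>l\<in>C. \<Delta> l \<in> rat_polytopes) \<and>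
     (\<forall>l1\<in>C. \<forall>l2\<in>C. \<forall>c1\<in>\<rat>. \<forall>c2\<in>\<rat>. 0 \<le> c1 \<longrightarrow> 0 \<le> c2 \<longrightarrow>
        \<Delta> (c1 *\<^sub>R l1 + c2 *\<^sub>R l2) = {c1 *\<^sub>R x + c2 *\<^sub>R y | x y. x \<in> \<Delta> l1 \<and> y \<in> \<Delta> l2})"

definition anticanonical ::
  "(real^'m) set \<Rightarrow> (real^'m) set \<Rightarrow> (real^'m) set \<Rightarrow> (real^'m \<Rightarrow> (real^'n) set) \<Rightarrow> real^'m \<Rightarrow> bool" where
  "anticanonical C Cint \<Gamma> \<Delta> \<kappa> \<longleftrightarrow> \<kappa> \<in> \<Gamma> \<and>
     (\<forall>\<gamma>\<in>Cint \<inter> \<Gamma>. \<gamma> - \<kappa> \<in> C \<inter> \<Gamma> \<longrightarrow> N (\<Delta> (\<gamma> - \<kappa>)) = N (rel_interior (\<Delta> \<gamma>)))"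

end

theory Submission
  imports Defs
begin

text \<open>Take \<gamma> = \<kappa> in the anticanonical condition: it equates the number of interior lattice
  points of \<Delta>(\<kappa>) with N(\<Delta>(0)), and linearity forces \<Delta>(0) = 0 \<cdot> \<Delta>(\<kappa>) + 0 \<cdot> \<Delta>(\<kappa>) = {0},
  which contains exactly the lattice point 0.\<close>

lemma zero_in_rat_cone: "0 \<in> rat_cone G"
proof -
  have "0 \<in> gen_cone G"
    unfolding gen_cone_def by (rule CollectI, rule exI[where x = "\<lambda>_. 0"]) simp
  then show ?thesis
    unfolding rat_cone_def rat_vecs_def by simp
qed

lemma rat_cone_interior_subset: "rat_cone_interior G \<subseteq> rat_cone G"
  unfolding rat_cone_interior_def rat_cone_def using interior_subset by blast

lemma zero_in_full_rank_lattice: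
  assumes "full_rank_lattice \<Gamma>"
  shows "0 \<in> \<Gamma>"
proof -
  obtain B where "\<Gamma> = {\<Sum>b\<in>B. of_int (k b) *\<^sub>R b | k. True}"
    using assms unfolding full_rank_lattice_def by blast
  then show ?thesis
    by (simp add: exI[where x = "\<lambda>_. 0"])
qed

lemma linear_family_nonempty:
  assumes "linear_family C \<Delta>" and "l \<in> C"
  shows "\<Delta> l \<noteq> {}"
proof -
  have "\<Delta> l \<in> rat_polytopes"
    using assms unfolding linear_family_def by blast
  then obtain S where "\<Delta> l = convex hull S" and "S \<noteq> {}"
    unfolding rat_polytopes_def by blast
  then show ?thesis by simp
qed

lemma linear_family_zero:
  assumes "linear_family C \<Delta>" and "l \<in> C"
  shows "\<Delta> 0 = {0}"
proof -
  have "\<Delta> ((0::real) *\<^sub>R l + (0::real) *\<^sub>R l) = {(0::real) *\<^sub>R x + (0::real) *\<^sub>R y | x y. x \<in> \<Delta> l \<and> y \<in> \<Delta> l}"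
    using assms unfolding linear_family_def by (simp only: Rats_0 order_refl ball_simps)
  also have "\<dots> = {0}"
    using linear_family_nonempty[OF assms] by auto
  finally show ?thesis by simp
qed

lemma N_zero_singleton: "N {0} = 1"
  unfolding N_def int_points_def by simp

lemma anticanonical_at_kappa:
  assumes "anticanonical C Cint \<Gamma> \<Delta> \<kappa>" and "\<kappa> \<in> Cint" and "0 \<in> C" and "0 \<in> \<Gamma>"
  shows "N (\<Delta> 0) = N (rel_interior (\<Delta> \<kappa>))"
  using assms unfolding anticanonical_def by force

theorem proposition1p8:
  fixes G :: "(real^'m) set" and \<Gamma> :: "(real^'m) set"
    and \<Delta> :: "real^'m \<Rightarrow> (real^'n) set" and \<kappa> :: "real^'m"
  assumes "finite G" and "G \<subseteq> rat_vecs"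
    and "interior (gen_cone G) \<noteq> {}"
    and "full_rank_lattice \<Gamma>"
    and "linear_family (rat_cone G) \<Delta>"
    and "anticanonical (rat_cone G) (rat_cone_interior G) \<Gamma> \<Delta> \<kappa>"
    and "\<kappa> \<in> rat_cone_interior G"
  shows "N (rel_interior (\<Delta> \<kappa>)) = 1"
proof -
  have "N (rel_interior (\<Delta> \<kappa>)) = N (\<Delta> 0)"
    using anticanonical_at_kappa[OF assms(6,7) zero_in_rat_cone zero_in_full_rank_lattice[OF assms(4)]]
    by simp
  also have "\<Delta> 0 = {0}"
    using linear_family_zero[OF assms(5)] assms(7) rat_cone_interior_subset by blast
  finally show ?thesis
    using N_zero_singleton by simp
qed

end
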